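(* Let $p(\mathbf{x};\theta)=f(\mathbf{x};\theta)/z(\theta)$ be a pairwise exponential family graphical model with parameter $\theta\in\Theta$, let $\phi=\mathrm{diag}(\theta)$, $\mu=z(\theta)/z(\phi)$, let $n\ge 1$ be an integer, $\gamma_k=\binom{n+k-1}{k}$, and let $\nu>0$. Let $\widetilde{T}_1,\widetilde{T}_2,\ldots$ be i.i.d. copies of $\widetilde{T}=\frac1N\sum_{i=1}^N f(\mathbf{y}_i;\theta)/f(\mathbf{y}_i;\phi)$ with $\mathbf{y}_i\overset{iid}{\sim}p(\cdot;\phi)$, let $U_k=\prod_{j=1}^k(1-\nu\widetilde{T}_j)$ (with $U_0=1$), let $R$ be a nonnegative-integer-valued random variable independent of the $\widetilde{T}_j$ with $\mathbb{P}(R\ge k)>0$ for all $k$, and set $$T=\sum_{k=0}^{R}\frac{\gamma_k}{\mathbb{P}(R\ge k)}\,U_k .$$ Suppose $\nu$ is such that $\mathbb{E}|1-\nu\widetilde{T}|<1$. Then $\mathbb{E}(|T|)<\infty$.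
   Context: A pairwise exponential family graphical model (PEGM) on $\mathbf{x}=(x_1,\dots,x_p)$ has unnormalized density $f(\mathbf{x};\theta)=\exp\{\sum_j T(x_j)\theta_{jj}+\sum_{j\ne k}T(x_j,x_k)\theta_{jk}\}$ with respect to a dominating measure, where $T(\cdot)$ and $T(\cdot,\cdot)$ are fixed sufficient statistics, $\theta\in\mathbb{R}^{p\times p}$, $z(\theta)=\int f(\mathbf{x};\theta)\,d\mathbf{x}$, and $\Theta=\{\theta: z(\theta)<\infty\}$. For $\theta\in\Theta$, $\phi=\mathrm{diag}(\theta)$ denotes the matrix with the same diagonal as $\theta$ and all off-diagonal entries zero (the independence model), assumed to lie in $\Theta$. $N\ge1$ is an integer. *)

theory Defs
  imports "HOL-Probability.Probability"
begin

text \<open>T1 = node sufficient statistic T(.), T2 = edge sufficient statistic T(.,.),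
  theta : 'p => 'p => real is the parameter matrix.\<close>

definition pegm_f ::
  "('b \<Rightarrow> real) \<Rightarrow> ('b \<Rightarrow> 'b \<Rightarrow> real) \<Rightarrow> ('p::finite \<Rightarrow> 'p \<Rightarrow> real) \<Rightarrow> ('p \<Rightarrow> 'b) \<Rightarrow> real"
  where "pegm_f T1 T2 \<theta> x =
    exp ((\<Sum>j\<in>UNIV. T1 (x j) * \<theta> j j)
       + (\<Sum>(j,k)\<in>{(j,k). j \<noteq> k}. T2 (x j) (x k) * \<theta> j k))"

definition pegm_z ::
  "('p \<Rightarrow> 'b) measure \<Rightarrow> ('b \<Rightarrow> real) \<Rightarrow> ('b \<Rightarrow> 'b \<Rightarrow> real) \<Rightarrow> ('p::finite \<Rightarrow> 'p \<Rightarrow> real) \<Rightarrow> ennreal"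
  where "pegm_z dx T1 T2 \<theta> = (\<integral>\<^sup>+ x. ennreal (pegm_f T1 T2 \<theta> x) \<partial>dx)"

definition pegm_Theta ::
  "('p \<Rightarrow> 'b) measure \<Rightarrow> ('b \<Rightarrow> real) \<Rightarrow> ('b \<Rightarrow> 'b \<Rightarrow> real) \<Rightarrow> ('p::finite \<Rightarrow> 'p \<Rightarrow> real) set"
  where "pegm_Theta dx T1 T2 = {\<theta>. pegm_z dx T1 T2 \<theta> < \<infinity>}"

definition diag_part :: "('p \<Rightarrow> 'p \<Rightarrow> real) \<Rightarrow> ('p \<Rightarrow> 'p \<Rightarrow> real)"
  where "diag_part \<theta> = (\<lambda>j k. if j = k then \<theta> j j else 0)"

definition pegm_density ::
  "('p \<Rightarrow> 'b) measure \<Rightarrow> ('b \<Rightarrow> real) \<Rightarrow> ('b \<Rightarrow> 'b \<Rightarrow> real) \<Rightarrow> ('p::finite \<Rightarrow> 'p \<Rightarrow> real) \<Rightarrow> ('p \<Rightarrow> 'b) \<Rightarrow> ennreal"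
  where "pegm_density dx T1 T2 \<theta> x = ennreal (pegm_f T1 T2 \<theta> x) / pegm_z dx T1 T2 \<theta>"

end

theory Submission
  imports Defs "HOL-Analysis.Generalised_Binomial_Theorem"
begin

(* Bounding |T| termwise, E|T| <= sum_k gamma_k / P(R >= k) * E[1{R >= k} prod_{j<=k} |1 - nu T_j|].
   Since R and the T_j are independent, the k-th expectation factorises into
   P(R >= k) * rho^k, where rho = E|1 - nu T_j| is the same for every j because the
   T_j are the same function of identically distributed i.i.d. samples. Hence
   E|T| <= sum_k binom(n+k-1, k) rho^k = (1 - rho)^(-n), finite as rho < 1. *)

lemma sums_negative_binomial:
  fixes r :: real
  assumes "\<bar>r\<bar> < 1" "n \<ge> 1"
  shows "(\<lambda>k. real ((n + k - 1) choose k) * r ^ k) sums (1 - r) powr - real n"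
proof -
  have "((- real n) gchoose k) * (- r) ^ k = real ((n + k - 1) choose k) * r ^ k" for k
  proof -
    have "real ((n + k - 1) choose k) = (real n + real k - 1) gchoose k"
      using assms(2) by (simp add: binomial_gbinomial of_nat_diff)
    then show ?thesis
      by (simp add: gbinomial_minus power_minus[of r] mult_ac)
  qed
  moreover have "(\<lambda>k. ((- real n) gchoose k) * (- r) ^ k) sums (1 + - r) powr - real n"
    by (rule gen_binomial_real) (use assms in simp)
  ultimately show ?thesis by simp
qed

lemma suminf_negative_binomial_ennreal_less_top:
  fixes \<rho> :: ennreal
  assumes "\<rho> < 1" "n \<ge> 1"
  shows "(\<Sum>k. ennreal (real ((n + k - 1) choose k)) * \<rho> ^ k) < \<top>"
proof -
  obtain r where r: "\<rho> = ennreal r" "0 \<le> r" "r < 1"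
    using assms(1) by (cases \<rho> rule: ennreal_cases) (auto simp: ennreal_less_one_iff)
  then have "(\<Sum>k. ennreal (real ((n + k - 1) choose k)) * \<rho> ^ k)
      = (\<Sum>k. ennreal (real ((n + k - 1) choose k) * r ^ k))"
    by (simp add: ennreal_power ennreal_mult'')
  also have "\<dots> = ennreal (\<Sum>k. real ((n + k - 1) choose k) * r ^ k)"
    using sums_negative_binomial[of r n] r assms(2)
    by (intro suminf_ennreal2) (auto simp: sums_summable)
  finally show ?thesis
    by simp
qed

lemma ennreal_abs_sum_prod_le:
  fixes a :: "nat \<Rightarrow> real" and w :: "nat \<Rightarrow> real"
  assumes "\<And>k. k \<in> K \<Longrightarrow> 0 \<le> a k"
  shows "ennreal \<bar>\<Sum>k\<in>K. a k * (\<Prod>j\<in>{1..k}. w j)\<bar>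
    \<le> (\<Sum>k\<in>K. ennreal (a k) * (\<Prod>j\<in>{1..k}. ennreal \<bar>w j\<bar>))"
proof -
  have "\<bar>\<Sum>k\<in>K. a k * (\<Prod>j\<in>{1..k}. w j)\<bar> \<le> (\<Sum>k\<in>K. a k * (\<Prod>j\<in>{1..k}. \<bar>w j\<bar>))"
    using assms by (auto intro!: order.trans[OF sum_abs] sum_mono simp: abs_mult abs_prod)
  then have "ennreal \<bar>\<Sum>k\<in>K. a k * (\<Prod>j\<in>{1..k}. w j)\<bar>
      \<le> ennreal (\<Sum>k\<in>K. a k * (\<Prod>j\<in>{1..k}. \<bar>w j\<bar>))"
    by (rule ennreal_leI)
  also have "\<dots> = (\<Sum>k\<in>K. ennreal (a k * (\<Prod>j\<in>{1..k}. \<bar>w j\<bar>)))"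
    using assms by (simp add: prod_nonneg)
  also have "\<dots> = (\<Sum>k\<in>K. ennreal (a k) * (\<Prod>j\<in>{1..k}. ennreal \<bar>w j\<bar>))"
    using assms by (intro sum.cong refl) (simp add: ennreal_mult' prod_ennreal)
  finally show ?thesis .
qed

lemma (in prob_space) indep_vars_measurable:
  "indep_vars M' X I \<Longrightarrow> i \<in> I \<Longrightarrow> X i \<in> measurable M (M' i)"
  unfolding indep_vars_def2 by blast

lemma (in prob_space) indep_sets_reindex:
  assumes ind: "indep_sets F I" and inj: "inj_on g J" and sub: "g ` J \<subseteq> I"
  shows "indep_sets (\<lambda>i. F (g i)) J"
  unfolding indep_sets_def
proof (intro conjI ballI allI impI)
  fix i assume "i \<in> J"
  then show "F (g i) \<subseteq> events"
    using ind sub unfolding indep_sets_def by auto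
next
  fix K A assume K: "K \<subseteq> J" "K \<noteq> {}" "finite K" and A: "A \<in> (\<Pi> j\<in>K. F (g j))"
  define B where "B = (\<lambda>x. A (the_inv_into K g x))"
  have inj_K: "inj_on g K"
    using inj K(1) by (rule inj_on_subset)
  have B_g: "B (g j) = A j" if "j \<in> K" for j
    using that inj_K by (simp add: B_def the_inv_into_f_f)
  have "prob (\<Inter>x\<in>g ` K. B x) = (\<Prod>x\<in>g ` K. prob (B x))"
    by (rule indep_setsD[OF ind]) (use K sub A B_g in auto)
  moreover have "(\<Inter>x\<in>g ` K. B x) = (\<Inter>j\<in>K. A j)"
    using B_g by auto
  moreover have "(\<Prod>x\<in>g ` K. prob (B x)) = (\<Prod>j\<in>K. prob (A j))"
    using inj_K B_g by (simp add: prod.reindex)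
  ultimately show "prob (\<Inter>j\<in>K. A j) = (\<Prod>j\<in>K. prob (A j))"
    by simp
qed

lemma (in prob_space) indep_vars_reindex:
  assumes ind: "indep_vars M' X I" and inj: "inj_on g J" and sub: "g ` J \<subseteq> I"
  shows "indep_vars (\<lambda>i. M' (g i)) (\<lambda>i. X (g i)) J"
  using ind sub unfolding indep_vars_def2
  by (auto intro!: indep_sets_reindex[OF _ inj sub,
        where F = "\<lambda>i. {X i -` A \<inter> space M |A. A \<in> sets (M' i)}"])

lemma (in prob_space) nn_integral_row_eq_PiM_density:
  fixes Y :: "'j \<Rightarrow> 'i \<Rightarrow> 'a \<Rightarrow> 'b" and g :: "('i \<Rightarrow> 'b) \<Rightarrow> ennreal"
  assumes indep: "indep_vars (\<lambda>_. N) (\<lambda>(j, i). Y j i) UNIV"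
    and distr: "\<And>i. i \<in> I \<Longrightarrow> distributed M N (Y j i) f"
    and "I \<noteq> {}"
    and g: "g \<in> borel_measurable (PiM I (\<lambda>_. N))"
  shows "(\<integral>\<^sup>+\<omega>. g (\<lambda>i\<in>I. Y j i \<omega>) \<partial>M) = (\<integral>\<^sup>+x. g x \<partial>PiM I (\<lambda>_. density N f))"
proof -
  have Y_meas: "Y j i \<in> measurable M N" if "i \<in> I" for i
    using distr[OF that] by (rule distributed_measurable)
  have "indep_vars (\<lambda>_. N) (\<lambda>i. Y j i) I"
    using indep_vars_reindex[OF indep, of "Pair j" I] by (simp add: inj_on_def)
  then have "distr M (PiM I (\<lambda>_. N)) (\<lambda>\<omega>. \<lambda>i\<in>I. Y j i \<omega>) = PiM I (\<lambda>i. distr M N (Y j i))"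
    using indep_vars_iff_distr_eq_PiM'[OF \<open>I \<noteq> {}\<close> Y_meas] by simp
  also have "\<dots> = PiM I (\<lambda>_. density N f)"
    by (intro PiM_cong refl distributed_distr_eq_density[OF distr])
  finally have law: "distr M (PiM I (\<lambda>_. N)) (\<lambda>\<omega>. \<lambda>i\<in>I. Y j i \<omega>) = PiM I (\<lambda>_. density N f)" .
  have "(\<integral>\<^sup>+\<omega>. g (\<lambda>i\<in>I. Y j i \<omega>) \<partial>M)
      = (\<integral>\<^sup>+x. g x \<partial>distr M (PiM I (\<lambda>_. N)) (\<lambda>\<omega>. \<lambda>i\<in>I. Y j i \<omega>))"
    using Y_meas g by (subst nn_integral_distr) (auto intro!: measurable_restrict)
  then show ?thesis
    by (simp only: law)
qed

lemma (in prob_space) events_ge_of_nat_measurable: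
  fixes R :: "'a \<Rightarrow> nat"
  assumes "(\<lambda>\<omega>. real (R \<omega>)) \<in> borel_measurable M"
  shows "{\<omega> \<in> space M. k \<le> R \<omega>} \<in> events"
  using measurable_sets[OF assms, of "{real k..}"] by (simp add: vimage_def Int_def conj_commute)

lemma (in prob_space) nn_integral_indicator_ge_prod_indep:
  fixes R :: "'a \<Rightarrow> nat" and W :: "nat \<Rightarrow> 'a \<Rightarrow> real"
  assumes indep: "indep_vars (\<lambda>_. borel) (\<lambda>j \<omega>. if j = 0 then real (R \<omega>) else W j \<omega>) UNIV"
  shows "(\<integral>\<^sup>+\<omega>. indicator {\<omega> \<in> space M. k \<le> R \<omega>} \<omega> * (\<Prod>j\<in>{1..k}. ennreal \<bar>W j \<omega>\<bar>) \<partial>M)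
       = ennreal (prob {\<omega> \<in> space M. k \<le> R \<omega>}) * (\<Prod>j\<in>{1..k}. \<integral>\<^sup>+\<omega>. ennreal \<bar>W j \<omega>\<bar> \<partial>M)"
proof -
  define X where "X j \<omega> = (if j = 0 then indicator {real k..} (real (R \<omega>)) else ennreal \<bar>W j \<omega>\<bar>)"
    for j :: nat and \<omega>
  have "indep_vars (\<lambda>_. borel) (\<lambda>j \<omega>. (\<lambda>t. if j = 0 then indicator {real k..} t else ennreal \<bar>t\<bar>)
          (if j = 0 then real (R \<omega>) else W j \<omega>)) UNIV"
    by (rule indep_vars_compose2[OF indep]) simp
  also have "(\<lambda>j \<omega>. (\<lambda>t. if j = 0 then indicator {real k..} t else ennreal \<bar>t\<bar>)
          (if j = 0 then real (R \<omega>) else W j \<omega>)) = X"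
    by (simp add: X_def fun_eq_iff)
  finally have indep_X: "indep_vars (\<lambda>_. borel) X {0..k}"
    by (rule indep_vars_subset) simp
  have R_ge_k: "{\<omega> \<in> space M. k \<le> R \<omega>} \<in> events"
    using indep_vars_measurable[OF indep UNIV_I, of 0] by (simp add: events_ge_of_nat_measurable)
  have "(\<integral>\<^sup>+\<omega>. indicator {real k..} (real (R \<omega>)) \<partial>M)
      = (\<integral>\<^sup>+\<omega>. indicator {\<omega> \<in> space M. k \<le> R \<omega>} \<omega> \<partial>M)"
    by (intro nn_integral_cong) (simp add: indicator_def)
  also have "\<dots> = ennreal (prob {\<omega> \<in> space M. k \<le> R \<omega>})"
    using R_ge_k by (simp add: emeasure_eq_measure)
  finally have int_X0: "(\<integral>\<^sup>+\<omega>. indicator {real k..} (real (R \<omega>)) \<partial>M)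
      = ennreal (prob {\<omega> \<in> space M. k \<le> R \<omega>})" .
  have split_0: "(\<Prod>j\<in>{0..k}. h j) = h 0 * (\<Prod>j\<in>{1..k}. h j)" for h :: "nat \<Rightarrow> ennreal"
    using prod.atLeast_Suc_atMost[of 0 k h] by simp
  have "(\<integral>\<^sup>+\<omega>. indicator {\<omega> \<in> space M. k \<le> R \<omega>} \<omega> * (\<Prod>j\<in>{1..k}. ennreal \<bar>W j \<omega>\<bar>) \<partial>M)
      = (\<integral>\<^sup>+\<omega>. (\<Prod>j\<in>{0..k}. X j \<omega>) \<partial>M)"
    by (intro nn_integral_cong) (simp add: split_0 X_def indicator_def)
  also have "\<dots> = (\<Prod>j\<in>{0..k}. \<integral>\<^sup>+\<omega>. X j \<omega> \<partial>M)"
    by (rule indep_vars_nn_integral[OF _ indep_X]) auto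
  also have "\<dots> = ennreal (prob {\<omega> \<in> space M. k \<le> R \<omega>}) * (\<Prod>j\<in>{1..k}. \<integral>\<^sup>+\<omega>. ennreal \<bar>W j \<omega>\<bar> \<partial>M)"
    by (simp add: split_0 int_X0 X_def)
  finally show ?thesis .
qed

lemma (in prob_space) nn_integral_abs_randomly_truncated_sum_le:
  fixes R :: "'a \<Rightarrow> nat" and W :: "nat \<Rightarrow> 'a \<Rightarrow> real" and c :: "nat \<Rightarrow> real"
  assumes indep: "indep_vars (\<lambda>_. borel) (\<lambda>j \<omega>. if j = 0 then real (R \<omega>) else W j \<omega>) UNIV"
    and R_pos: "\<And>k. prob {\<omega> \<in> space M. k \<le> R \<omega>} > 0"
    and c_nonneg: "\<And>k. 0 \<le> c k"
    and W_bound: "\<And>j. j \<ge> 1 \<Longrightarrow> (\<integral>\<^sup>+\<omega>. ennreal \<bar>W j \<omega>\<bar> \<partial>M) \<le> \<rho>"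
  shows "(\<integral>\<^sup>+\<omega>. ennreal \<bar>\<Sum>k\<in>{0..R \<omega>}.
            c k / prob {\<omega>' \<in> space M. k \<le> R \<omega>'} * (\<Prod>j\<in>{1..k}. W j \<omega>)\<bar> \<partial>M)
    \<le> (\<Sum>k. ennreal (c k) * \<rho> ^ k)"
proof -
  define P where "P k = prob {\<omega> \<in> space M. k \<le> R \<omega>}" for k
  have P_c_nonneg: "0 \<le> c k / P k" for k
    using c_nonneg[of k] R_pos[of k] by (simp add: P_def)
  define f where "f k \<omega> = ennreal (c k / P k) *
      (indicator {\<omega> \<in> space M. k \<le> R \<omega>} \<omega> * (\<Prod>j\<in>{1..k}. ennreal \<bar>W j \<omega>\<bar>))" for k \<omega>
  have W_meas: "W j \<in> borel_measurable M" if "j \<ge> 1" for j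
    using indep_vars_measurable[OF indep UNIV_I, of j] that by simp
  have term_meas: "(\<lambda>\<omega>. indicator {\<omega> \<in> space M. k \<le> R \<omega>} \<omega> * (\<Prod>j\<in>{1..k}. ennreal \<bar>W j \<omega>\<bar>))
      \<in> borel_measurable M" for k
    using indep_vars_measurable[OF indep UNIV_I, of 0] W_meas
    by (intro borel_measurable_times_ennreal borel_measurable_indicator borel_measurable_prod_ennreal
        measurable_compose[OF _ measurable_ennreal] borel_measurable_abs)
       (auto simp: events_ge_of_nat_measurable)
  \<comment> \<open>The weight 1 / P(R >= k) cancels the probability that the k-th term is present.\<close>
  have int_f: "(\<integral>\<^sup>+\<omega>. f k \<omega> \<partial>M) \<le> ennreal (c k) * \<rho> ^ k" for k
  proof -
    have "(\<integral>\<^sup>+\<omega>. f k \<omega> \<partial>M)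
        = ennreal (c k / P k) * (ennreal (P k) * (\<Prod>j\<in>{1..k}. \<integral>\<^sup>+\<omega>. ennreal \<bar>W j \<omega>\<bar> \<partial>M))"
      unfolding f_def P_def nn_integral_cmult[OF term_meas] nn_integral_indicator_ge_prod_indep[OF indep] ..
    also have "\<dots> \<le> ennreal (c k / P k) * (ennreal (P k) * \<rho> ^ k)"
      using W_bound prod_mono_ennreal[of "{1..k}" "\<lambda>j. \<integral>\<^sup>+\<omega>. ennreal \<bar>W j \<omega>\<bar> \<partial>M" "\<lambda>_. \<rho>"]
      by (intro mult_left_mono) auto
    also have "\<dots> = ennreal (c k) * \<rho> ^ k"
      using R_pos[of k] c_nonneg[of k] by (simp add: P_def ennreal_mult'[symmetric] mult.assoc[symmetric])
    finally show ?thesis .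
  qed
  have pointwise: "ennreal \<bar>\<Sum>k\<in>{0..R \<omega>}. c k / P k * (\<Prod>j\<in>{1..k}. W j \<omega>)\<bar> \<le> (\<Sum>k. f k \<omega>)"
    if "\<omega> \<in> space M" for \<omega>
  proof -
    have "ennreal \<bar>\<Sum>k\<in>{0..R \<omega>}. c k / P k * (\<Prod>j\<in>{1..k}. W j \<omega>)\<bar>
        \<le> (\<Sum>k\<in>{0..R \<omega>}. ennreal (c k / P k) * (\<Prod>j\<in>{1..k}. ennreal \<bar>W j \<omega>\<bar>))"
      using P_c_nonneg by (rule ennreal_abs_sum_prod_le)
    also have "\<dots> = (\<Sum>k\<in>{0..R \<omega>}. f k \<omega>)"
      using that by (intro sum.cong refl) (simp add: f_def)
    also have "\<dots> = (\<Sum>k. f k \<omega>)"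
      by (rule suminf_finite[symmetric]) (auto simp: f_def)
    finally show ?thesis .
  qed
  have "(\<integral>\<^sup>+\<omega>. ennreal \<bar>\<Sum>k\<in>{0..R \<omega>}. c k / P k * (\<Prod>j\<in>{1..k}. W j \<omega>)\<bar> \<partial>M)
      \<le> (\<integral>\<^sup>+\<omega>. (\<Sum>k. f k \<omega>) \<partial>M)"
    by (rule nn_integral_mono) (rule pointwise)
  also have "\<dots> = (\<Sum>k. \<integral>\<^sup>+\<omega>. f k \<omega> \<partial>M)"
    unfolding f_def by (intro nn_integral_suminf borel_measurable_times_ennreal borel_measurable_const term_meas)
  also have "\<dots> \<le> (\<Sum>k. ennreal (c k) * \<rho> ^ k)"
    by (intro suminf_le int_f summableI)
  finally show ?thesis
    unfolding P_def .
qed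

theorem proposition1:
  fixes M :: "'a measure"
    and dx :: "('p::finite \<Rightarrow> 'b) measure"
    and T1 :: "'b \<Rightarrow> real" and T2 :: "'b \<Rightarrow> 'b \<Rightarrow> real"
    and \<theta> :: "'p \<Rightarrow> 'p \<Rightarrow> real"
    and N n :: nat and \<nu> :: real
    and Y :: "nat \<Rightarrow> nat \<Rightarrow> 'a \<Rightarrow> ('p \<Rightarrow> 'b)"
    and R :: "'a \<Rightarrow> nat"
    and Tt :: "nat \<Rightarrow> 'a \<Rightarrow> real"
    and U :: "nat \<Rightarrow> 'a \<Rightarrow> real"
    and T :: "'a \<Rightarrow> real"
    and \<gamma> :: "nat \<Rightarrow> real"
  assumes "prob_space M"
    and meas: "\<And>th. (\<lambda>x. pegm_f T1 T2 th x) \<in> borel_measurable dx"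
    and \<theta>_in: "\<theta> \<in> pegm_Theta dx T1 T2"
    and \<phi>_in: "diag_part \<theta> \<in> pegm_Theta dx T1 T2"
    and N: "N \<ge> 1" and n: "n \<ge> 1" and \<nu>: "\<nu> > 0"
    and \<gamma>_def: "\<And>k. \<gamma> k = real ((n + k - 1) choose k)"
    \<comment> \<open>all samples y are i.i.d. from p(.;phi)\<close>
    and Y_distr: "\<And>j i. distributed M dx (Y j i) (pegm_density dx T1 T2 (diag_part \<theta>))"
    and Y_indep: "prob_space.indep_vars M (\<lambda>_. dx) (\<lambda>(j, i). Y j i) UNIV"
    \<comment> \<open>the j-th copy of the estimator T-tilde (j >= 1)\<close>
    and Tt_def: "\<And>j \<omega>. Tt j \<omega> = (1 / real N) *
         (\<Sum>i<N. pegm_f T1 T2 \<theta> (Y j i \<omega>) / pegm_f T1 T2 (diag_part \<theta>) (Y j i \<omega>))"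
    \<comment> \<open>R is independent of the T-tilde's (index 0 = R, index j >= 1 = Tt j)\<close>
    and R_indep: "prob_space.indep_vars M (\<lambda>_. borel)
                    (\<lambda>j \<omega>. if j = 0 then real (R \<omega>) else Tt j \<omega>) UNIV"
    and R_pos: "\<And>k. prob_space.prob M {\<omega> \<in> space M. R \<omega> \<ge> k} > 0"
    and U_def: "\<And>k \<omega>. U k \<omega> = (\<Prod>j\<in>{1..k}. 1 - \<nu> * Tt j \<omega>)"
    and T_def: "\<And>\<omega>. T \<omega> = (\<Sum>k\<in>{0..R \<omega>}.
                    \<gamma> k / prob_space.prob M {\<omega>' \<in> space M. R \<omega>' \<ge> k} * U k \<omega>)"
    and small: "(\<integral>\<^sup>+ \<omega>. ennreal \<bar>1 - \<nu> * Tt 1 \<omega>\<bar> \<partial>M) < 1"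
  shows "(\<integral>\<^sup>+ \<omega>. ennreal \<bar>T \<omega>\<bar> \<partial>M) < \<infinity>"
proof -
  interpret prob_space M by fact
  note meas[measurable]
  define G where "G x = 1 / real N * (\<Sum>i<N. pegm_f T1 T2 \<theta> (x i) / pegm_f T1 T2 (diag_part \<theta>) (x i))"
    for x :: "nat \<Rightarrow> 'p \<Rightarrow> 'b"
  have Tt_G: "Tt j \<omega> = G (\<lambda>i\<in>{..<N}. Y j i \<omega>)" for j \<omega>
    by (simp add: Tt_def G_def)
  have "{..<N} \<noteq> {}"
    using N lessThan_iff[of 0 N] by fastforce
  moreover have "(\<lambda>x. ennreal \<bar>1 - \<nu> * G x\<bar>) \<in> borel_measurable (PiM {..<N} (\<lambda>_. dx))"
    unfolding G_def by measurable
  ultimately have row_law: "(\<integral>\<^sup>+\<omega>. ennreal \<bar>1 - \<nu> * Tt j \<omega>\<bar> \<partial>M)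
      = (\<integral>\<^sup>+x. ennreal \<bar>1 - \<nu> * G x\<bar> \<partial>PiM {..<N} (\<lambda>_. density dx (pegm_density dx T1 T2 (diag_part \<theta>))))"
    for j
    unfolding Tt_G
    by (rule nn_integral_row_eq_PiM_density[OF Y_indep Y_distr, where g = "\<lambda>x. ennreal \<bar>1 - \<nu> * G x\<bar>"])
  have "indep_vars (\<lambda>_. borel) (\<lambda>j \<omega>. (\<lambda>t. if j = 0 then t else 1 - \<nu> * t)
      (if j = 0 then real (R \<omega>) else Tt j \<omega>)) UNIV"
    by (rule indep_vars_compose2[OF R_indep]) simp
  then have indep: "indep_vars (\<lambda>_. borel) (\<lambda>j \<omega>. if j = 0 then real (R \<omega>) else 1 - \<nu> * Tt j \<omega>) UNIV"
    by (simp add: if_distrib cong: if_cong)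
  have "(\<integral>\<^sup>+\<omega>. ennreal \<bar>T \<omega>\<bar> \<partial>M)
      \<le> (\<Sum>k. ennreal (\<gamma> k) * (\<integral>\<^sup>+\<omega>. ennreal \<bar>1 - \<nu> * Tt 1 \<omega>\<bar> \<partial>M) ^ k)"
    using nn_integral_abs_randomly_truncated_sum_le[OF indep R_pos] row_law
    by (simp add: T_def U_def \<gamma>_def)
  also have "\<dots> < \<top>"
    using suminf_negative_binomial_ennreal_less_top[OF small n] by (simp add: \<gamma>_def)
  finally show ?thesis
    by simp
qed

end
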